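(* Let $n\ge1$, $\mu>0$, let $B^1,\dots,B^n$ be independent standard Brownian motions and $G_{1,\mu}$ an independent Gamma process, and let $I^n_\mu(t)=(B^1(G_{1,\mu}(t)),\dots,B^n(G_{1,\mu}(t)))^T$. Its density $$q(\mathbf x,t)=\int_0^\infty\prod_{i=1}^n\frac{e^{-x_i^2/(2s)}}{\sqrt{2\pi s}}\,\frac{s^{\mu-1}e^{-s/t}}{t^\mu\Gamma(\mu)}\,ds,\qquad\mathbf x\in\mathbb R^n,\ t>0,$$ satisfies $$4\frac{\partial q}{\partial t}=(2\mu-n)\,\Delta q-\Delta(\mathbf x\cdot\nabla q),$$ where $\Delta=\sum_i\partial_{x_i}^2$ and $\mathbf x\cdot\nabla q=\sum_i x_i\partial_{x_i}q$.
   Context: $G_{1,\mu}(t)$ is a positive process whose value at time $t$ has density $s^{\mu-1}e^{-s/t}/(t^\mu\Gamma(\mu))$, $s>0$; all Brownian motions are subordinated by the same process $G_{1,\mu}$. *)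

theory Defs
  imports "HOL-Analysis.Analysis"
begin

definition qdens :: "real \<Rightarrow> real ^ 'n \<Rightarrow> real \<Rightarrow> real" where
  "qdens \<mu> x t =
     (LINT s:{0<..}|lborel.
        (\<Prod>i\<in>UNIV. exp (- (x $ i)\<^sup>2 / (2 * s)) / sqrt (2 * pi * s))
        * (s powr (\<mu> - 1) * exp (- s / t) / (t powr \<mu> * Gamma \<mu>)))"

definition pderiv_i :: "'n \<Rightarrow> (real ^ 'n \<Rightarrow> real) \<Rightarrow> real ^ 'n \<Rightarrow> real" where
  "pderiv_i i f x = deriv (\<lambda>h. f (x + h *\<^sub>R axis i 1)) 0"

definition laplace :: "(real ^ 'n \<Rightarrow> real) \<Rightarrow> real ^ 'n \<Rightarrow> real" where
  "laplace f x = (\<Sum>i\<in>UNIV. pderiv_i i (pderiv_i i f) x)"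

definition xgrad :: "(real ^ 'n \<Rightarrow> real) \<Rightarrow> real ^ 'n \<Rightarrow> real" where
  "xgrad f x = (\<Sum>i\<in>UNIV. x $ i * pderiv_i i f x)"

end

theory Submission
  imports Defs "HOL-Probability.Distributions" "HOL-Real_Asymp.Real_Asymp"
begin

text \<open>
  Writing n for the dimension, the Gaussian factors combine to
  exp(-|x|^2/(2s)) (2 pi s)^(-n/2), so the density is q(x,t) = c t^(-mu) J(a, |x|^2, t) with
  a = mu - 1 - n/2 and the generalized inverse Gaussian integral
  J(b, r, t) = int_0^oo s^b exp(-r/(2s) - s/t) ds.
  Differentiation under the integral sign gives dJ/dr = -J(b-1)/2 and dJ/dt = J(b+1)/t^2, and
  integration by parts gives the recurrence J(b) = t (b J(b-1) + r/2 J(b-2)).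
  On the spatial side q(., t) is radial, and for a radial function G(|x|^2) away from the origin
  both the Laplacian and the Laplacian of the Euler term x . grad are expressed through the
  first three derivatives of the profile G.  Both sides of the PDE thus become linear
  combinations of J(a+1), ..., J(a-3), and three instances of the recurrence show that they agree.
\<close>

lemma integral_dominated_convergence_at:
  fixes s :: "real \<Rightarrow> 'a \<Rightarrow> real"
  assumes f: "f \<in> borel_measurable M"
    and w: "integrable M w"
    and lim: "AE x in M. ((\<lambda>p. s p x) \<longlongrightarrow> f x) (at p0)"
    and dominated: "eventually (\<lambda>p. s p \<in> borel_measurable M \<and> (AE x in M. norm (s p x) \<le> w x)) (at p0)"
  shows "((\<lambda>p. integral\<^sup>L M (s p)) \<longlongrightarrow> integral\<^sup>L M f) (at p0)"
  unfolding tendsto_at_iff_sequentially comp_def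
proof (intro allI impI)
  fix X :: "nat \<Rightarrow> real"
  assume "\<forall>i. X i \<in> UNIV - {p0}" and "X \<longlonglongrightarrow> p0"
  then have X: "filterlim X (at p0) sequentially"
    by (simp add: filterlim_at)
  from filterlim_iff[THEN iffD1, OF X, rule_format, OF dominated]
  obtain N where N: "\<And>n. N \<le> n \<Longrightarrow> s (X n) \<in> borel_measurable M \<and> (AE x in M. norm (s (X n) x) \<le> w x)"
    by (auto simp: eventually_sequentially)
  show "(\<lambda>n. integral\<^sup>L M (s (X n))) \<longlonglongrightarrow> integral\<^sup>L M f"
  proof (rule LIMSEQ_offset[where k=N], rule integral_dominated_convergence)
    show "AE x in M. (\<lambda>n. s (X (n + N)) x) \<longlonglongrightarrow> f x"
      using lim by eventually_elim
        (rule LIMSEQ_ignore_initial_segment, rule filterlim_compose[OF _ X])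
  qed (use f w N in auto)
qed

lemma has_real_derivative_integral:
  fixes f f' :: "real \<Rightarrow> 'a \<Rightarrow> real" and g :: "'a \<Rightarrow> real"
  assumes \<delta>: "\<delta> > 0"
    and der: "\<And>p s. \<bar>p - p0\<bar> < \<delta> \<Longrightarrow> ((\<lambda>p. f p s) has_real_derivative f' p s) (at p)"
    and int: "\<And>p. \<bar>p - p0\<bar> < \<delta> \<Longrightarrow> integrable M (f p)"
    and bnd: "\<And>p s. \<bar>p - p0\<bar> < \<delta> \<Longrightarrow> \<bar>f' p s\<bar> \<le> g s"
    and g: "integrable M g"
    and meas: "f' p0 \<in> borel_measurable M"
  shows "((\<lambda>p. integral\<^sup>L M (f p)) has_real_derivative integral\<^sup>L M (f' p0)) (at p0)"
proof -
  define quot where "quot p s = (f p s - f p0 s) / (p - p0)" for p s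
  have near: "eventually (\<lambda>p. \<bar>p - p0\<bar> < \<delta>) (at p0)"
    using \<delta> by (auto simp: eventually_at dist_real_def)
  txt \<open>By the mean value theorem the difference quotients are dominated by g.\<close>
  have quot_bound: "\<bar>quot p s\<bar> \<le> g s" if p: "\<bar>p - p0\<bar> < \<delta>" for p s
  proof -
    have "norm (f p s - f p0 s) \<le> g s * norm (p - p0)"
      by (rule field_differentiable_bound[where S="ball p0 \<delta>" and f'="\<lambda>p. f' p s"])
        (use p \<delta> der bnd in \<open>auto simp: dist_real_def intro: has_field_derivative_at_within\<close>)
    moreover have "0 \<le> g s"
      using bnd[of p0 s] \<delta> by linarith
    ultimately show ?thesis
      by (cases "p = p0") (simp_all add: quot_def abs_divide divide_le_eq)
  qed
  have quot_integral: "integral\<^sup>L M (quot p) = (integral\<^sup>L M (f p) - integral\<^sup>L M (f p0)) / (p - p0)"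
    if "\<bar>p - p0\<bar> < \<delta>" for p
    using int[OF that] int[of p0] \<delta> by (simp add: quot_def[abs_def])
  have "((\<lambda>p. integral\<^sup>L M (quot p)) \<longlongrightarrow> integral\<^sup>L M (f' p0)) (at p0)"
  proof (rule integral_dominated_convergence_at[OF meas g])
    show "AE s in M. ((\<lambda>p. quot p s) \<longlongrightarrow> f' p0 s) (at p0)"
      using der[of p0] \<delta> by (simp add: quot_def has_field_derivative_iff)
    show "eventually (\<lambda>p. quot p \<in> borel_measurable M \<and> (AE s in M. norm (quot p s) \<le> g s)) (at p0)"
      using near
    proof eventually_elim
      case (elim p)
      then show ?case
        using int[OF elim] int[of p0] quot_bound[OF elim] by (auto simp: quot_def[abs_def])
    qed
  qed
  then have "((\<lambda>p. (integral\<^sup>L M (f p) - integral\<^sup>L M (f p0)) / (p - p0)) \<longlongrightarrow> integral\<^sup>L M (f' p0)) (at p0)"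
    by (rule Lim_transform_eventually) (use near quot_integral in \<open>auto elim: eventually_mono\<close>)
  then show ?thesis
    by (simp add: has_field_derivative_iff)
qed

text \<open>The generalized inverse Gaussian kernel and its integral over the half line.
  With b = mu - 1 - n/2 and r = |x|^2 it is, up to a constant, the integrand of the density q.\<close>
definition gig_kernel :: "real \<Rightarrow> real \<Rightarrow> real \<Rightarrow> real \<Rightarrow> real" where
  "gig_kernel b r t s = s powr b * exp (- r / (2 * s) - s / t)"

definition gig_integral :: "real \<Rightarrow> real \<Rightarrow> real \<Rightarrow> real" where
  "gig_integral b r t = (LINT s:{0<..}|lborel. gig_kernel b r t s)"

text \<open>The integral written over the whole line, the form needed for the Bochner integral lemmas.\<close>
lemma gig_integral_altdef:
  "gig_integral b r t = integral\<^sup>L lborel (\<lambda>s. indicator {0<..} s * gig_kernel b r t s)"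
  unfolding gig_integral_def set_lebesgue_integral_def by simp

lemma gig_kernel_nonneg: "gig_kernel b r t s \<ge> 0"
  by (simp add: gig_kernel_def)

text \<open>The kernel decreases in r and increases in t; this yields the dominating functions
  for differentiation under the integral sign.\<close>
lemma gig_kernel_mono:
  assumes "s > 0" "r' \<le> r" "0 < t" "t \<le> t'"
  shows "gig_kernel b r t s \<le> gig_kernel b r' t' s"
proof -
  have "r' / (2 * s) \<le> r / (2 * s)" "s / t' \<le> s / t"
    using assms by (auto intro: divide_right_mono divide_left_mono)
  then show ?thesis
    unfolding gig_kernel_def by (intro mult_left_mono) auto
qed

lemma exp_neg_le_power:
  fixes y :: real
  assumes y: "y > 0" and m: "m > 0"
  shows "exp (- y) \<le> (real m / y) ^ m"
proof -
  have "(y / real m) ^ m \<le> (1 + y / real m) ^ m"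
    using y by (intro power_mono) auto
  also have "\<dots> \<le> exp y"
    using y m by (intro exp_ge_one_plus_x_over_n_power_n) auto
  finally have "1 / exp y \<le> 1 / (y / real m) ^ m"
    using y m by (intro divide_left_mono) auto
  then show ?thesis
    by (simp add: exp_minus inverse_eq_divide power_divide)
qed

lemma powr_exp_inverse_bound:
  fixes b r s :: real
  assumes r: "r > 0" and s: "s > 0" and m: "\<bar>b\<bar> \<le> real m" "m > 0"
  shows "s powr b * exp (- r / (2 * s)) \<le> (2 * real m / r) ^ m + s ^ m"
proof (cases "s \<ge> 1")
  case True
  have "s powr b \<le> s ^ m"
    using True m s powr_mono[of b "real m" s] by (simp add: powr_realpow)
  moreover have "exp (- r / (2 * s)) \<le> 1"
    using r s by simp
  ultimately have "s powr b * exp (- r / (2 * s)) \<le> s ^ m"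
    using mult_mono[of "s powr b" "s ^ m" "exp (- r / (2 * s))" 1] s by simp
  then show ?thesis
    using r by (simp add: add_increasing)
next
  case False
  have "s powr b \<le> s powr (- real m)"
    using False s m by (intro powr_mono') auto
  then have sb: "s powr b \<le> 1 / s ^ m"
    using s by (simp add: powr_minus powr_realpow divide_inverse)
  have "exp (- (r / (2 * s))) \<le> (real m / (r / (2 * s))) ^ m"
    using r s m by (intro exp_neg_le_power) auto
  then have ex: "exp (- r / (2 * s)) \<le> (2 * real m / r * s) ^ m"
    by (simp add: field_simps)
  have "s powr b * exp (- r / (2 * s)) \<le> 1 / s ^ m * (2 * real m / r * s) ^ m"
    using sb ex by (rule mult_mono) (use s in simp_all)
  also have "\<dots> = (2 * real m / r) ^ m"
    using s unfolding power_mult_distrib by simp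
  finally show ?thesis
    using s by (simp add: add_increasing2)
qed

lemma integrable_power_exp:
  fixes l :: real
  assumes "l > 0"
  shows "integrable lborel (\<lambda>x. indicator {0<..} x * (x ^ i * exp (- l * x)))"
proof -
  have "integrable lborel (\<lambda>x. erlang_density 0 l x * x ^ i)"
  proof (rule integrableI_nonneg)
    show "AE x in lborel. 0 \<le> erlang_density 0 l x * x ^ i"
      using assms by (auto simp: erlang_density_def)
    show "(\<integral>\<^sup>+ x. ennreal (erlang_density 0 l x * x ^ i) \<partial>lborel) < \<infinity>"
      using nn_integral_erlang_ith_moment[OF assms, of 0 i] by simp
  qed measurable
  then have "integrable lborel (\<lambda>x. indicator {0<..} x *\<^sub>R (erlang_density 0 l x * x ^ i))"
    by (intro integrable_mult_indicator) auto
  then have "integrable lborel (\<lambda>x. indicator {0<..} x * (erlang_density 0 l x * x ^ i) / l)"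
    unfolding real_scaleR_def by (rule integrable_divide_zero)
  moreover have "indicator {0<..} x * (erlang_density 0 l x * x ^ i) / l
      = indicator {0<..} x * (x ^ i * exp (- l * x))" for x
    using assms by (auto simp: erlang_density_def indicator_def)
  ultimately show ?thesis by simp
qed

text \<open>For r, t > 0 the kernel is integrable on the half line, being bounded by
  (C + s^m) exp(-s/t).\<close>
lemma gig_kernel_integrable:
  assumes r: "r > 0" and t: "t > 0"
  shows "integrable lborel (\<lambda>s. indicator {0<..} s * gig_kernel b r t s)"
proof -
  define m where "m = nat \<lceil>\<bar>b\<bar>\<rceil> + 1"
  define C where "C = (2 * real m / r) ^ m"
  have m: "\<bar>b\<bar> \<le> real m" "m > 0"
    unfolding m_def by linarith+
  define w where "w s = C * (indicator {0<..} s * (s ^ 0 * exp (- (1/t) * s)))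
      + indicator {0<..} s * (s ^ m * exp (- (1/t) * s))" for s :: real
  have "integrable lborel w"
    unfolding w_def using t by (intro Bochner_Integration.integrable_add integrable_mult_right integrable_power_exp) auto
  then show ?thesis
  proof (rule Bochner_Integration.integrable_bound)
    show "AE s in lborel. norm (indicator {0<..} s * gig_kernel b r t s) \<le> norm (w s)"
    proof (rule AE_I2)
      fix s :: real
      show "norm (indicator {0<..} s * gig_kernel b r t s) \<le> norm (w s)"
      proof (cases "s > 0")
        case True
        have "gig_kernel b r t s = s powr b * exp (- r / (2 * s)) * exp (- s / t)"
          by (simp add: gig_kernel_def exp_diff exp_minus field_simps)
        also have "\<dots> \<le> (C + s ^ m) * exp (- s / t)"
          using powr_exp_inverse_bound[OF r True m] by (intro mult_right_mono) (simp_all add: C_def)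
        also have "\<dots> = w s"
          using True by (simp add: w_def algebra_simps)
        finally show ?thesis
          using True gig_kernel_nonneg[of b r t s] by simp
      qed simp
    qed
  qed (simp add: gig_kernel_def)
qed

lemma gig_integral_deriv_r:
  assumes r: "r > 0" and t: "t > 0"
  shows "((\<lambda>r. gig_integral b r t) has_real_derivative - gig_integral (b - 1) r t / 2) (at r)"
proof -
  have "((\<lambda>p. integral\<^sup>L lborel (\<lambda>s. indicator {0<..} s * gig_kernel b p t s)) has_real_derivative
      integral\<^sup>L lborel (\<lambda>s. indicator {0<..} s * (- gig_kernel (b - 1) r t s / 2))) (at r)"
  proof (rule has_real_derivative_integral[where \<delta>="r / 2"
        and g="\<lambda>s. indicator {0<..} s * gig_kernel (b - 1) (r / 2) t s / 2"])
    fix p s assume "\<bar>p - r\<bar> < r / 2"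
    then have p: "r / 2 \<le> p" by linarith
    show "((\<lambda>p. indicator {0<..} s * gig_kernel b p t s) has_real_derivative
        indicator {0<..} s * (- gig_kernel (b - 1) p t s / 2)) (at p)"
      by (cases "s > 0") (auto intro!: derivative_eq_intros simp: gig_kernel_def powr_diff field_simps)
    show "\<bar>indicator {0<..} s * (- gig_kernel (b - 1) p t s / 2)\<bar>
        \<le> indicator {0<..} s * gig_kernel (b - 1) (r / 2) t s / 2"
      using p t gig_kernel_mono[of s "r / 2" p t t "b - 1"] gig_kernel_nonneg[of "b - 1" p t s]
      by (auto simp: indicator_def)
  next
    fix p assume "\<bar>p - r\<bar> < r / 2"
    then show "integrable lborel (\<lambda>s. indicator {0<..} s * gig_kernel b p t s)"
      using t by (intro gig_kernel_integrable) linarith+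
  next
    show "integrable lborel (\<lambda>s. indicator {0<..} s * gig_kernel (b - 1) (r / 2) t s / 2)"
      using r t by (intro integrable_divide_zero gig_kernel_integrable) auto
  next
    show "(\<lambda>s. indicator {0<..} s * (- gig_kernel (b - 1) r t s / 2)) \<in> borel_measurable lborel"
      unfolding gig_kernel_def by measurable
  qed (use r in simp)
  then show ?thesis
    by (simp add: gig_integral_altdef)
qed

lemma gig_integral_deriv_t:
  assumes r: "r > 0" and t: "t > 0"
  shows "((\<lambda>t. gig_integral b r t) has_real_derivative gig_integral (b + 1) r t / t\<^sup>2) (at t)"
proof -
  have "((\<lambda>p. integral\<^sup>L lborel (\<lambda>s. indicator {0<..} s * gig_kernel b r p s)) has_real_derivative
      integral\<^sup>L lborel (\<lambda>s. indicator {0<..} s * gig_kernel (b + 1) r t s / t\<^sup>2)) (at t)"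
  proof (rule has_real_derivative_integral[where \<delta>="t / 2"
        and g="\<lambda>s. indicator {0<..} s * gig_kernel (b + 1) r (3 * t / 2) s * (4 / t\<^sup>2)"])
    fix p s assume "\<bar>p - t\<bar> < t / 2"
    then have p: "t / 2 \<le> p" "p \<le> 3 * t / 2" and p0: "p > 0" by linarith+
    show "((\<lambda>p. indicator {0<..} s * gig_kernel b r p s) has_real_derivative
        indicator {0<..} s * gig_kernel (b + 1) r p s / p\<^sup>2) (at p)"
      using p0 by (cases "s > 0")
        (auto intro!: derivative_eq_intros simp: gig_kernel_def powr_add power2_eq_square field_simps)
    have "(t / 2)\<^sup>2 \<le> p\<^sup>2"
      using p t by (intro power_mono) auto
    then have "1 / p\<^sup>2 \<le> 4 / t\<^sup>2"
      using t p0 by (simp add: field_simps)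
    moreover have "gig_kernel (b + 1) r p s \<le> gig_kernel (b + 1) r (3 * t / 2) s" if "s > 0"
      using p p0 that by (intro gig_kernel_mono) auto
    ultimately have "gig_kernel (b + 1) r p s * (1 / p\<^sup>2) \<le> gig_kernel (b + 1) r (3 * t / 2) s * (4 / t\<^sup>2)"
      if "s > 0"
      using that gig_kernel_nonneg[of "b + 1" r p s] by (intro mult_mono) auto
    then show "\<bar>indicator {0<..} s * gig_kernel (b + 1) r p s / p\<^sup>2\<bar>
        \<le> indicator {0<..} s * gig_kernel (b + 1) r (3 * t / 2) s * (4 / t\<^sup>2)"
      using gig_kernel_nonneg[of "b + 1" r p s] by (cases "s > 0") simp_all
  next
    fix p assume "\<bar>p - t\<bar> < t / 2"
    then show "integrable lborel (\<lambda>s. indicator {0<..} s * gig_kernel b r p s)"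
      using r by (intro gig_kernel_integrable) linarith+
  next
    show "integrable lborel (\<lambda>s. indicator {0<..} s * gig_kernel (b + 1) r (3 * t / 2) s * (4 / t\<^sup>2))"
      using r t by (intro integrable_mult_left gig_kernel_integrable) auto
  qed (use t in \<open>simp_all add: gig_kernel_def\<close>)
  then show ?thesis
    by (simp add: gig_integral_altdef)
qed

lemma gig_kernel_deriv_s:
  assumes "s > 0" "t > 0"
  shows "(gig_kernel b r t has_real_derivative
      b * gig_kernel (b - 1) r t s + r / 2 * gig_kernel (b - 2) r t s - gig_kernel b r t s / t) (at s)"
  unfolding gig_kernel_def[abs_def] using assms
  by (auto intro!: derivative_eq_intros simp: powr_diff power2_eq_square field_simps)

text \<open>Integration by parts (the kernel vanishes at both ends of the half line) gives the
  three-term recurrence J(b) = t (b J(b-1) + r/2 J(b-2)).\<close>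
lemma gig_integral_recurrence:
  assumes r: "r > 0" and t: "t > 0"
  shows "gig_integral b r t = t * (b * gig_integral (b - 1) r t + r / 2 * gig_integral (b - 2) r t)"
proof -
  define k where "k c s = indicator {0<..} s * gig_kernel c r t s" for c s
  define f where "f s = b * gig_kernel (b - 1) r t s + r / 2 * gig_kernel (b - 2) r t s - gig_kernel b r t s / t" for s
  have k_int: "integrable lborel (k c)" for c
    unfolding k_def using r t by (rule gig_kernel_integrable)
  have f_eq: "(\<lambda>s. indicator {0<..} s * f s) = (\<lambda>s. b * k (b - 1) s + r / 2 * k (b - 2) s - k b s / t)"
    by (simp add: fun_eq_iff f_def k_def algebra_simps)
  have "(LBINT s=ereal 0..\<infinity>. f s) = 0 - 0"
  proof (rule interval_integral_FTC_integrable[where F="gig_kernel b r t"])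
    fix s assume "ereal 0 < ereal s"
    then have s: "s > 0" by simp
    show "(gig_kernel b r t has_vector_derivative f s) (at s)"
      using gig_kernel_deriv_s[OF s t] by (simp add: f_def has_real_derivative_iff_has_vector_derivative)
    have "isCont (gig_kernel c r t) s" for c
      by (rule DERIV_isCont[OF gig_kernel_deriv_s[OF s t]])
    then show "isCont f s"
      unfolding f_def[abs_def] using t by (intro continuous_intros) auto
  next
    have "integrable lborel (\<lambda>s. indicator {0<..} s * f s)"
      unfolding f_eq using k_int
      by (intro Bochner_Integration.integrable_diff Bochner_Integration.integrable_add
          integrable_mult_right integrable_divide_zero)
    then show "set_integrable lborel (einterval (ereal 0) \<infinity>) f"
      by (simp add: set_integrable_def)
    show "((gig_kernel b r t \<circ> real_of_ereal) \<longlongrightarrow> 0) (at_right (ereal 0))"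
      unfolding ereal_tendsto_simps1 gig_kernel_def[abs_def] using r t by real_asymp
    show "((gig_kernel b r t \<circ> real_of_ereal) \<longlongrightarrow> 0) (at_left \<infinity>)"
      unfolding ereal_tendsto_simps1 gig_kernel_def[abs_def] using r t by real_asymp
  qed simp
  moreover have "(LBINT s=ereal 0..\<infinity>. f s) = integral\<^sup>L lborel (\<lambda>s. indicator {0<..} s * f s)"
    by (simp add: interval_lebesgue_integral_def set_lebesgue_integral_def)
  moreover have "integral\<^sup>L lborel (\<lambda>s. indicator {0<..} s * f s)
      = b * gig_integral (b - 1) r t + r / 2 * gig_integral (b - 2) r t - gig_integral b r t / t"
  proof -
    have "integral\<^sup>L lborel (\<lambda>s. b * k (b - 1) s + r / 2 * k (b - 2) s - k b s / t)
        = b * integral\<^sup>L lborel (k (b - 1)) + r / 2 * integral\<^sup>L lborel (k (b - 2)) - integral\<^sup>L lborel (k b) / t"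
      using k_int by (simp add: Bochner_Integration.integral_diff Bochner_Integration.integral_add)
    then show ?thesis
      unfolding f_eq gig_integral_altdef k_def .
  qed
  ultimately show ?thesis
    using t by (simp add: field_simps)
qed

lemma inner_axis_shift:
  fixes y :: "real ^ 'n"
  shows "(y + h *\<^sub>R axis i 1) \<bullet> (y + h *\<^sub>R axis i 1) = y \<bullet> y + 2 * h * y $ i + h\<^sup>2"
  by (simp add: inner_add_left inner_add_right inner_axis inner_axis' inner_axis_axis
      algebra_simps power2_eq_square)

lemma sum_square_components: "(\<Sum>i\<in>UNIV. (y $ i)\<^sup>2) = y \<bullet> (y :: real ^ 'n)"
  by (simp add: inner_vec_def power2_eq_square)

lemma radial_partial_deriv:
  fixes g :: "real ^ 'n \<Rightarrow> real"
  assumes G: "\<And>r. r > 0 \<Longrightarrow> (G has_real_derivative G' r) (at r)"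
    and g: "\<And>z. z \<noteq> 0 \<Longrightarrow> g z = G (z \<bullet> z)"
    and y: "y \<noteq> 0"
  shows "((\<lambda>h. g (y + h *\<^sub>R axis i 1)) has_real_derivative 2 * y $ i * G' (y \<bullet> y)) (at 0)"
proof -
  have "((\<lambda>h. y \<bullet> y + 2 * h * y $ i + h\<^sup>2) has_real_derivative 2 * y $ i) (at 0)"
    by (auto intro!: derivative_eq_intros)
  from DERIV_chain2[where f=G, OF _ this] G[of "y \<bullet> y"] y
  have "((\<lambda>h. G (y \<bullet> y + 2 * h * y $ i + h\<^sup>2)) has_real_derivative 2 * y $ i * G' (y \<bullet> y)) (at 0)"
    by (simp add: mult.commute)
  then show ?thesis
  proof (rule has_field_derivative_transform_within_open[where S="{h. y + h *\<^sub>R axis i 1 \<noteq> 0}"])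
    show "open {h. y + h *\<^sub>R axis i 1 \<noteq> 0}"
      by (intro open_Collect_neq continuous_intros)
    show "0 \<in> {h. y + h *\<^sub>R axis i 1 \<noteq> 0}"
      using y by simp
  qed (use g in \<open>auto simp: inner_axis_shift mult.commute\<close>)
qed

text \<open>The same for a function of the form g(z) = z_i H(|z|^2), such as a partial derivative
  of a radial function.\<close>
lemma linear_radial_partial_deriv:
  fixes g :: "real ^ 'n \<Rightarrow> real"
  assumes H: "\<And>r. r > 0 \<Longrightarrow> (H has_real_derivative H' r) (at r)"
    and g: "\<And>z. z \<noteq> 0 \<Longrightarrow> g z = z $ i * H (z \<bullet> z)"
    and y: "y \<noteq> 0"
  shows "((\<lambda>h. g (y + h *\<^sub>R axis i 1)) has_real_derivative
      H (y \<bullet> y) + 2 * (y $ i)\<^sup>2 * H' (y \<bullet> y)) (at 0)"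
proof -
  have coordinate: "((\<lambda>h. y $ i + h) has_real_derivative 1) (at 0)"
    by (auto intro!: derivative_eq_intros)
  have radial: "((\<lambda>h. H ((y + h *\<^sub>R axis i 1) \<bullet> (y + h *\<^sub>R axis i 1))) has_real_derivative
      2 * y $ i * H' (y \<bullet> y)) (at 0)"
    by (rule radial_partial_deriv[where g="\<lambda>z::real ^ 'n. H (z \<bullet> z)", OF H _ y]) simp_all
  have "((\<lambda>h. (y $ i + h) * H ((y + h *\<^sub>R axis i 1) \<bullet> (y + h *\<^sub>R axis i 1)))
      has_real_derivative H (y \<bullet> y) + 2 * (y $ i)\<^sup>2 * H' (y \<bullet> y)) (at 0)"
    by (rule DERIV_cong[OF DERIV_mult[OF coordinate radial]]) (simp add: power2_eq_square)
  then show ?thesis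
  proof (rule has_field_derivative_transform_within_open[where S="{h. y + h *\<^sub>R axis i 1 \<noteq> 0}"])
    show "open {h. y + h *\<^sub>R axis i 1 \<noteq> 0}"
      by (intro open_Collect_neq continuous_intros)
    show "0 \<in> {h. y + h *\<^sub>R axis i 1 \<noteq> 0}"
      using y by simp
  qed (use g in \<open>auto simp: axis_def\<close>)
qed

lemma pderiv_radial:
  assumes G: "\<And>r. r > 0 \<Longrightarrow> (G has_real_derivative G' r) (at r)"
    and g: "\<And>z. z \<noteq> 0 \<Longrightarrow> g z = G (z \<bullet> z)"
    and y: "y \<noteq> 0"
  shows "pderiv_i i g y = y $ i * (2 * G' (y \<bullet> y))"
  unfolding pderiv_i_def using DERIV_imp_deriv[OF radial_partial_deriv[OF G g y]] by simp

lemma xgrad_radial: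
  assumes G: "\<And>r. r > 0 \<Longrightarrow> (G has_real_derivative G' r) (at r)"
    and g: "\<And>z. z \<noteq> 0 \<Longrightarrow> g z = G (z \<bullet> z)"
    and y: "y \<noteq> 0"
  shows "xgrad g y = 2 * (y \<bullet> y) * G' (y \<bullet> y)"
proof -
  have "xgrad g y = (\<Sum>i\<in>UNIV. (y $ i)\<^sup>2 * (2 * G' (y \<bullet> y)))"
    unfolding xgrad_def using pderiv_radial[OF G g y] by (simp add: power2_eq_square mult.assoc)
  then show ?thesis
    by (simp add: sum_distrib_right[symmetric] sum_square_components)
qed

lemma laplace_radial:
  fixes g :: "real ^ 'n \<Rightarrow> real"
  assumes G: "\<And>r. r > 0 \<Longrightarrow> (G has_real_derivative G1 r) (at r)"
    and G1: "\<And>r. r > 0 \<Longrightarrow> (G1 has_real_derivative G2 r) (at r)"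
    and g: "\<And>z. z \<noteq> 0 \<Longrightarrow> g z = G (z \<bullet> z)"
    and x: "x \<noteq> 0"
  shows "(\<forall>i. (\<lambda>h. pderiv_i i g (x + h *\<^sub>R axis i 1)) differentiable (at 0))
    \<and> laplace g x = 2 * real CARD('n) * G1 (x \<bullet> x) + 4 * (x \<bullet> x) * G2 (x \<bullet> x)"
proof -
  have second: "((\<lambda>h. pderiv_i i g (x + h *\<^sub>R axis i 1)) has_real_derivative
      2 * G1 (x \<bullet> x) + 2 * (x $ i)\<^sup>2 * (2 * G2 (x \<bullet> x))) (at 0)" for i
    using pderiv_radial[OF G g] G1 x
    by (intro linear_radial_partial_deriv[where H="\<lambda>r. 2 * G1 r"]) (auto intro!: derivative_eq_intros)
  have "laplace g x = (\<Sum>i\<in>UNIV. 2 * G1 (x \<bullet> x) + (x $ i)\<^sup>2 * (4 * G2 (x \<bullet> x)))"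
    unfolding laplace_def pderiv_i_def[of _ "pderiv_i _ g"]
    using DERIV_imp_deriv[OF second] by (simp add: mult_ac)
  also have "\<dots> = 2 * real CARD('n) * G1 (x \<bullet> x) + 4 * (x \<bullet> x) * G2 (x \<bullet> x)"
    unfolding sum.distrib sum_distrib_right[symmetric] sum_square_components by simp
  finally show ?thesis
    using second real_differentiable_def by blast
qed

text \<open>Laplacian of the Euler operator applied to a radial function, from the two previous
  lemmas applied to the radial profile r -> 2 r G'(r).\<close>
lemma laplace_xgrad_radial:
  fixes g :: "real ^ 'n \<Rightarrow> real"
  assumes G: "\<And>r. r > 0 \<Longrightarrow> (G has_real_derivative G1 r) (at r)"
    and G1: "\<And>r. r > 0 \<Longrightarrow> (G1 has_real_derivative G2 r) (at r)"
    and G2: "\<And>r. r > 0 \<Longrightarrow> (G2 has_real_derivative G3 r) (at r)"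
    and g: "\<And>z. z \<noteq> 0 \<Longrightarrow> g z = G (z \<bullet> z)"
    and x: "x \<noteq> 0"
  shows "(\<forall>i. (\<lambda>h. pderiv_i i (xgrad g) (x + h *\<^sub>R axis i 1)) differentiable (at 0))
    \<and> laplace (xgrad g) x = 2 * real CARD('n) * (2 * G1 (x \<bullet> x) + 2 * (x \<bullet> x) * G2 (x \<bullet> x))
        + 4 * (x \<bullet> x) * (4 * G2 (x \<bullet> x) + 2 * (x \<bullet> x) * G3 (x \<bullet> x))"
proof (rule laplace_radial[OF _ _ _ x])
  show "((\<lambda>r. 2 * r * G1 r) has_real_derivative 2 * G1 r + 2 * r * G2 r) (at r)" if "r > 0" for r
    using G1[OF that] by (auto intro!: derivative_eq_intros)
  show "((\<lambda>r. 2 * G1 r + 2 * r * G2 r) has_real_derivative 4 * G2 r + 2 * r * G3 r) (at r)"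
    if "r > 0" for r
    using G1[OF that] G2[OF that] by (auto intro!: derivative_eq_intros)
  show "xgrad g z = 2 * (z \<bullet> z) * G1 (z \<bullet> z)" if "z \<noteq> 0" for z
    by (rule xgrad_radial[OF G g that])
qed

lemma gaussian_product:
  fixes y :: "real ^ 'n"
  shows "(\<Prod>i\<in>UNIV. exp (- (y $ i)\<^sup>2 / (2 * s)) / sqrt (2 * pi * s))
       = exp (- (y \<bullet> y) / (2 * s)) / sqrt (2 * pi * s) ^ CARD('n)"
proof -
  have "(\<Sum>i\<in>UNIV. - (y $ i)\<^sup>2 / (2 * s)) = - (y \<bullet> y) / (2 * s)"
    by (simp add: sum_square_components sum_negf sum_divide_distrib[symmetric])
  then have "(\<Prod>i\<in>UNIV. exp (- (y $ i)\<^sup>2 / (2 * s))) = exp (- (y \<bullet> y) / (2 * s))"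
    by (metis exp_sum finite_class.finite_UNIV)
  then show ?thesis
    by (simp add: prod_dividef)
qed

lemma sqrt_power_powr:
  fixes s :: real
  assumes "s > 0"
  shows "sqrt (2 * pi * s) ^ n = (2 * pi) powr (real n / 2) * s powr (real n / 2)"
proof -
  have "sqrt (2 * pi * s) ^ n = ((2 * pi * s) powr (1 / 2)) powr real n"
    using assms by (simp add: powr_half_sqrt powr_realpow)
  also have "\<dots> = (2 * pi) powr (real n / 2) * s powr (real n / 2)"
    using assms by (simp add: powr_powr powr_mult)
  finally show ?thesis .
qed

definition qdens_const :: "nat \<Rightarrow> real \<Rightarrow> real" where
  "qdens_const n \<mu> = 1 / ((2 * pi) powr (real n / 2) * Gamma \<mu>)"

lemma qdens_gig:
  fixes y :: "real ^ 'n"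
  shows "qdens \<mu> y \<tau> = qdens_const CARD('n) \<mu> / \<tau> powr \<mu>
      * gig_integral (\<mu> - 1 - real CARD('n) / 2) (y \<bullet> y) \<tau>"
proof -
  define c where "c = qdens_const CARD('n) \<mu> / \<tau> powr \<mu>"
  have integrand: "(\<Prod>i\<in>UNIV. exp (- (y $ i)\<^sup>2 / (2 * s)) / sqrt (2 * pi * s))
        * (s powr (\<mu> - 1) * exp (- s / \<tau>) / (\<tau> powr \<mu> * Gamma \<mu>))
      = c * gig_kernel (\<mu> - 1 - real CARD('n) / 2) (y \<bullet> y) \<tau> s" if "s \<in> {0<..}" for s
  proof -
    have s: "s > 0" using that by simp
    have "exp (- (y \<bullet> y) / (2 * s) - s / \<tau>) = exp (- (y \<bullet> y) / (2 * s)) * exp (- s / \<tau>)"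
      using exp_add[of "- (y \<bullet> y) / (2 * s)" "- s / \<tau>"] by simp
    moreover have "s powr (\<mu> - 1 - real CARD('n) / 2) = s powr (\<mu> - 1) / s powr (real CARD('n) / 2)"
      by (simp add: powr_diff)
    ultimately show ?thesis
      unfolding gaussian_product sqrt_power_powr[OF s] gig_kernel_def c_def qdens_const_def
      by (simp only: divide_inverse inverse_mult_distrib mult_ac mult_1_left)
  qed
  have "qdens \<mu> y \<tau> = (LINT s:{0<..}|lborel. c * gig_kernel (\<mu> - 1 - real CARD('n) / 2) (y \<bullet> y) \<tau> s)"
    unfolding qdens_def by (rule set_lebesgue_integral_cong) (use integrand in auto)
  then show ?thesis
    by (simp add: gig_integral_def c_def)
qed

lemma qdens_deriv_t:
  fixes y :: "real ^ 'n" and \<mu> t :: real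
  defines "a \<equiv> \<mu> - 1 - real CARD('n) / 2" and "K \<equiv> qdens_const CARD('n) \<mu> / t powr \<mu>"
  assumes y: "y \<noteq> 0" and t: "t > 0"
  shows "((\<lambda>\<tau>. qdens \<mu> y \<tau>) has_real_derivative
      K * (gig_integral (a + 1) (y \<bullet> y) t / t\<^sup>2 - \<mu> / t * gig_integral a (y \<bullet> y) t)) (at t)"
proof -
  have "((\<lambda>\<tau>. qdens_const CARD('n) \<mu> / \<tau> powr \<mu> * gig_integral a (y \<bullet> y) \<tau>) has_real_derivative
      K * (gig_integral (a + 1) (y \<bullet> y) t / t\<^sup>2 - \<mu> / t * gig_integral a (y \<bullet> y) t)) (at t)"
    using y t gig_integral_deriv_t[of "y \<bullet> y" t a]
    by (auto intro!: derivative_eq_intros simp: K_def powr_diff field_simps)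
  then show ?thesis
    by (simp add: qdens_gig a_def)
qed

lemma gig_integral_deriv_r_scaled:
  assumes "r > 0" "t > 0"
  shows "((\<lambda>r. c * gig_integral b r t) has_real_derivative - c / 2 * gig_integral (b - 1) r t) (at r)"
  using DERIV_cmult[OF gig_integral_deriv_r[OF assms], of c b] by simp

text \<open>The algebraic core of the PDE: an identity between five numbers j1, ..., jm3 (standing
  for J(a+1), ..., J(a-3)) linked by three instances of the recurrence.\<close>
lemma pde_coefficient_identity:
  fixes t K \<mu> N r a j1 j0 jm1 jm2 jm3 :: real
  assumes t: "t > 0" and a: "a = \<mu> - 1 - N / 2"
    and j1: "j1 = t * ((a + 1) * j0 + r / 2 * jm1)"
    and j0: "j0 = t * (a * jm1 + r / 2 * jm2)"
    and jm1: "jm1 = t * ((a - 1) * jm2 + r / 2 * jm3)"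
  shows "4 * (K * (j1 / t\<^sup>2 - \<mu> / t * j0))
    = (2 * \<mu> - N) * (2 * N * (- K / 2 * jm1) + 4 * r * (K / 4 * jm2))
      - (2 * N * (2 * (- K / 2 * jm1) + 2 * r * (K / 4 * jm2))
         + 4 * r * (4 * (K / 4 * jm2) + 2 * r * (- (K / 4) / 2 * jm3)))"
  unfolding j1 unfolding j0 unfolding jm1 a
  using t by (simp add: field_simps power2_eq_square)

lemma gig_pde_identity:
  fixes \<mu> N K :: real
  assumes r: "r > 0" and t: "t > 0" and a: "a = \<mu> - 1 - N / 2"
  defines "J b \<equiv> gig_integral b r t"
  shows "4 * (K * (J (a + 1) / t\<^sup>2 - \<mu> / t * J a))
    = (2 * \<mu> - N) * (2 * N * (- K / 2 * J (a - 1)) + 4 * r * (K / 4 * J (a - 2)))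
      - (2 * N * (2 * (- K / 2 * J (a - 1)) + 2 * r * (K / 4 * J (a - 2)))
         + 4 * r * (4 * (K / 4 * J (a - 2)) + 2 * r * (- (K / 4) / 2 * J (a - 3))))"
proof (rule pde_coefficient_identity[OF t a])
  have recurrence: "J b = t * (b * J (b - 1) + r / 2 * J (b - 2))" for b
    unfolding J_def by (rule gig_integral_recurrence[OF r t])
  show "J (a + 1) = t * ((a + 1) * J a + r / 2 * J (a - 1))"
    using recurrence[of "a + 1"] by simp
  show "J a = t * (a * J (a - 1) + r / 2 * J (a - 2))"
    by (rule recurrence)
  show "J (a - 1) = t * ((a - 1) * J (a - 2) + r / 2 * J (a - 3))"
    using recurrence[of "a - 1"] by simp
qed

theorem mainTheorem14:
  fixes \<mu> t :: real and x :: "real ^ 'n"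
  assumes "\<mu> > 0" and "t > 0" and "x \<noteq> 0"
  shows "(\<lambda>\<tau>. qdens \<mu> x \<tau>) differentiable (at t)
    \<and> (\<forall>i. (\<lambda>h. pderiv_i i (\<lambda>y. qdens \<mu> y t) (x + h *\<^sub>R axis i 1)) differentiable (at 0))
    \<and> (\<forall>i. (\<lambda>h. pderiv_i i (xgrad (\<lambda>y. qdens \<mu> y t)) (x + h *\<^sub>R axis i 1)) differentiable (at 0))
    \<and> 4 * deriv (\<lambda>\<tau>. qdens \<mu> x \<tau>) t
        = (2 * \<mu> - real CARD('n)) * laplace (\<lambda>y. qdens \<mu> y t) x
          - laplace (xgrad (\<lambda>y. qdens \<mu> y t)) x"
proof -
  note t = \<open>t > 0\<close> and x = \<open>x \<noteq> 0\<close>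
  define N a R K where "N = real CARD('n)" and "a = \<mu> - 1 - N / 2" and "R = x \<bullet> x"
    and "K = qdens_const CARD('n) \<mu> / t powr \<mu>"
  define J where "J b r = gig_integral b r t" for b r
  txt \<open>In space the density is radial with profile K J(a, r), whose k-th r-derivative is
    K (-1/2)^k J(a-k, r).\<close>
  have radial: "qdens \<mu> y t = K * J a (y \<bullet> y)" for y :: "real ^ 'n"
    unfolding qdens_gig K_def a_def N_def J_def ..
  have dG: "((\<lambda>r. c * J b r) has_real_derivative - c / 2 * J (b - 1) r) (at r)" if "r > 0" for c b r
    unfolding J_def using that t by (rule gig_integral_deriv_r_scaled)
  have dG1: "((\<lambda>r. - K / 2 * J (a - 1) r) has_real_derivative K / 4 * J (a - 2) r) (at r)" if "r > 0" for r
    using dG[OF that, of "- K / 2" "a - 1"] by (simp add: algebra_simps)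
  have dG2: "((\<lambda>r. K / 4 * J (a - 2) r) has_real_derivative - (K / 4) / 2 * J (a - 3) r) (at r)" if "r > 0" for r
    using dG[OF that, of "K / 4" "a - 2"] by (simp add: algebra_simps)
  note lap = laplace_radial[OF dG dG1 radial x] and lapx = laplace_xgrad_radial[OF dG dG1 dG2 radial x]
  have dt: "((\<lambda>\<tau>. qdens \<mu> x \<tau>) has_real_derivative K * (J (a + 1) R / t\<^sup>2 - \<mu> / t * J a R)) (at t)"
    using qdens_deriv_t[OF x t] unfolding K_def a_def N_def J_def R_def .
  have pde: "4 * (K * (J (a + 1) R / t\<^sup>2 - \<mu> / t * J a R))
      = (2 * \<mu> - N) * (2 * N * (- K / 2 * J (a - 1) R) + 4 * R * (K / 4 * J (a - 2) R))
        - (2 * N * (2 * (- K / 2 * J (a - 1) R) + 2 * R * (K / 4 * J (a - 2) R))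
           + 4 * R * (4 * (K / 4 * J (a - 2) R) + 2 * R * (- (K / 4) / 2 * J (a - 3) R)))"
    unfolding J_def by (rule gig_pde_identity[OF _ t a_def]) (use x in \<open>simp add: R_def\<close>)
  show ?thesis
    using dt lap lapx pde DERIV_imp_deriv[OF dt] real_differentiable_def
    unfolding R_def N_def by auto
qed

end
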